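(* Every realizable rooted chirotope $(\chi,u)$ with ground set $X$ has a realization $\mathcal P=\{\mathfrak p_x\}_{x\in X}$ such that $\mathfrak p_u=(0,1)$, $\mathfrak p_{u^+}=(0,0)$, $\mathfrak p_{u^-}=(1,0)$, and the half-line $\mathfrak p_u+\mathbb R_{\ge 0}(0,1)$ does not cross any line of the set $\{(\mathfrak p_x\mathfrak p_y): x,y\in X\setminus\{u\},\ x\ne y\}$.
   Context: A chirotope on a finite set $X$ is a map $\chi$ from ordered triples of distinct elements of $X$ to $\{-1,1\}$ satisfying the usual alternating symmetry and the interiority and transitivity axioms. It is realizable if there exist points $\mathfrak p_x\in\mathbb R^2$ ($x\in X$), no three collinear, such that $\chi(x,y,z)=1$ iff $\mathfrak p_x,\mathfrak p_y,\mathfrak p_z$ are in counterclockwise order; such a point family is a realization of $\chi$. An element $u$ is extreme if there is $y\ne u$ with $\chi(u,y,z)$ constant over $z\in X\setminus\{u,y\}$ (for realizations: $\mathfrak p_u$ is a vertex of the convex hull). A rooted chirotope is a pair $(\chi,u)$ with $u$ an extreme element of $\chi$; $u^+$ and $u^-$ denote the successor and predecessor of $u$, in counterclockwise order, on the convex hull of $\chi$ (i.e. $u^+$ is the element $y$ with $\chi(u,y,z)=1$ for all $z\notin\{u,y\}$, and $u^-$ the element $y$ with $\chi(y,u,z)=1$ for all $z\notin\{u,y\}$). *)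

theory Defs
  imports "HOL-Analysis.Analysis"
begin

type_synonym 'a chi = "'a \<Rightarrow> 'a \<Rightarrow> 'a \<Rightarrow> int"

definition distinct3 :: "'a \<Rightarrow> 'a \<Rightarrow> 'a \<Rightarrow> bool" where
  "distinct3 x y z \<longleftrightarrow> x \<noteq> y \<and> y \<noteq> z \<and> x \<noteq> z"

text \<open>Chirotope on X (Knuth's CC-system axioms); only values on ordered triples of
  distinct elements of X matter.\<close>
definition chirotope :: "'a set \<Rightarrow> 'a chi \<Rightarrow> bool" where
  "chirotope X ch \<longleftrightarrow>
     (\<forall>p\<in>X. \<forall>q\<in>X. \<forall>r\<in>X. distinct3 p q r \<longrightarrow>
        ch p q r \<in> {-1, 1} \<and> ch p q r = ch q r p \<and> ch p q r = - ch p r q) \<and>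
     (\<forall>p\<in>X. \<forall>q\<in>X. \<forall>r\<in>X. \<forall>t\<in>X. distinct3 p q r \<and> t \<notin> {p, q, r} \<longrightarrow>
        ch t q r = 1 \<and> ch p t r = 1 \<and> ch p q t = 1 \<longrightarrow> ch p q r = 1) \<and>
     (\<forall>p\<in>X. \<forall>q\<in>X. \<forall>r\<in>X. \<forall>s\<in>X. \<forall>t\<in>X.
        distinct3 p q r \<and> s \<notin> {p, q, r} \<and> t \<notin> {p, q, r, s} \<longrightarrow>
        ch t s p = 1 \<and> ch t s q = 1 \<and> ch t s r = 1 \<and> ch t p q = 1 \<and> ch t q r = 1
        \<longrightarrow> ch t p r = 1)"

text \<open>Orientation determinant: positive iff a, b, c are in counterclockwise order.\<close>
definition orient :: "real \<times> real \<Rightarrow> real \<times> real \<Rightarrow> real \<times> real \<Rightarrow> real" where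
  "orient a b c = (fst b - fst a) * (snd c - snd a) - (snd b - snd a) * (fst c - fst a)"

definition is_realization :: "'a set \<Rightarrow> 'a chi \<Rightarrow> ('a \<Rightarrow> real \<times> real) \<Rightarrow> bool" where
  "is_realization X ch P \<longleftrightarrow>
     (\<forall>x\<in>X. \<forall>y\<in>X. \<forall>z\<in>X. distinct3 x y z \<longrightarrow>
        orient (P x) (P y) (P z) \<noteq> 0 \<and> (ch x y z = 1 \<longleftrightarrow> orient (P x) (P y) (P z) > 0))"

definition realizable :: "'a set \<Rightarrow> 'a chi \<Rightarrow> bool" where
  "realizable X ch \<longleftrightarrow> (\<exists>P. is_realization X ch P)"

definition extreme :: "'a set \<Rightarrow> 'a chi \<Rightarrow> 'a \<Rightarrow> bool" where
  "extreme X ch u \<longleftrightarrow> u \<in> X \<and>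
     (\<exists>y\<in>X. y \<noteq> u \<and> (\<exists>c. \<forall>z\<in>X - {u, y}. ch u y z = c))"

definition rooted_chirotope :: "'a set \<Rightarrow> 'a chi \<Rightarrow> 'a \<Rightarrow> bool" where
  "rooted_chirotope X ch u \<longleftrightarrow> chirotope X ch \<and> extreme X ch u"

text \<open>Successor u^+ and predecessor u^- of u on the convex hull.\<close>
definition hull_succ :: "'a set \<Rightarrow> 'a chi \<Rightarrow> 'a \<Rightarrow> 'a" where
  "hull_succ X ch u = (THE y. y \<in> X \<and> y \<noteq> u \<and> (\<forall>z\<in>X - {u, y}. ch u y z = 1))"

definition hull_pred :: "'a set \<Rightarrow> 'a chi \<Rightarrow> 'a \<Rightarrow> 'a" where
  "hull_pred X ch u = (THE y. y \<in> X \<and> y \<noteq> u \<and> (\<forall>z\<in>X - {u, y}. ch y u z = 1))"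

definition line_through :: "real \<times> real \<Rightarrow> real \<times> real \<Rightarrow> (real \<times> real) set" where
  "line_through a b = {a + t *\<^sub>R (b - a) | t. True}"

definition upward_ray :: "real \<times> real \<Rightarrow> (real \<times> real) set" where
  "upward_ray a = {a + t *\<^sub>R (0, 1) | t. t \<ge> 0}"

end

theory Submission
  imports Defs
begin

text \<open>As \<open>u\<close> is extreme, the other points lie in a closed half-plane
  bounded by a line through the point of \<open>u\<close>, so the angular order around that point is a linear
  order on \<open>X - {u}\<close>; its least and greatest elements are \<open>u\<^sup>+\<close> and \<open>u\<^sup>-\<close>. An
  orientation-preserving affine map sends \<open>u, u\<^sup>+, u\<^sup>-\<close> to \<open>(0, 1), (0, 0), (1, 0)\<close>; then all
  points lie in the triangle they span, hence not above the line \<open>y = 1\<close>. No line through two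
  points other than \<open>u\<close> passes through \<open>(0, 1)\<close>, so by finiteness none meets the vertical segment
  from \<open>(0, 1)\<close> to \<open>(0, 1 + d)\<close> for some \<open>d > 0\<close>. Finally a projective map fixing the three
  normalised points and sending the line \<open>y = 1 + d\<close> to infinity preserves the orientation of all
  triples below that line and stretches the segment onto the upward ray.\<close>

lemma orient_cycle: "orient a b c = orient b c a"
  by (simp add: orient_def algebra_simps)

lemma orient_swap: "orient a c b = - orient a b c"
  by (simp add: orient_def algebra_simps)

lemma orient_eq_0_if_in_line_through:
  assumes "p \<in> line_through a b"
  shows "orient a b p = 0"
proof -
  obtain t where p: "p = a + t *\<^sub>R (b - a)"
    using assms unfolding line_through_def by blast
  have "orient a b (a + t *\<^sub>R (b - a)) = 0"
    by (simp add: orient_def algebra_simps)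
  then show ?thesis
    using p by simp
qed

lemma orient_homogeneous:
  fixes x1 y1 w1 x2 y2 w2 x3 y3 w3 :: real
  assumes "w1 \<noteq> 0" "w2 \<noteq> 0" "w3 \<noteq> 0"
  shows "orient (x1 / w1, y1 / w1) (x2 / w2, y2 / w2) (x3 / w3, y3 / w3) =
    (x1 * (y2 * w3 - y3 * w2) - y1 * (x2 * w3 - x3 * w2) + w1 * (x2 * y3 - x3 * y2)) / (w1 * w2 * w3)"
  using assms by (simp add: orient_def field_simps)

lemma orient_cycle_in_closed_halfplane:
  assumes "orient p a b > 0" "orient p b c > 0" "orient p c a > 0"
    and "s * orient p q a \<ge> 0" "s * orient p q b \<ge> 0" "s * orient p q c \<ge> 0"
  shows "s * orient p q a = 0 \<and> s * orient p q b = 0 \<and> s * orient p q c = 0"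
proof -
  \<comment> \<open>for vectors based at \<open>p\<close>, \<open>[b,c] a + [c,a] b + [a,b] c = 0\<close> where \<open>[x,y] = orient p x y\<close>;
    pair this with \<open>q - p\<close>\<close>
  have "orient p b c * (s * orient p q a) + orient p c a * (s * orient p q b)
      + orient p a b * (s * orient p q c) = 0"
    by (simp add: orient_def algebra_simps)
  moreover have "orient p b c * (s * orient p q a) \<ge> 0" "orient p c a * (s * orient p q b) \<ge> 0"
      "orient p a b * (s * orient p q c) \<ge> 0"
    using assms by simp_all
  ultimately have "orient p b c * (s * orient p q a) = 0" "orient p c a * (s * orient p q b) = 0"
      "orient p a b * (s * orient p q c) = 0"
    by linarith+
  then show ?thesis
    using assms(1-3) by simp
qed

lemma is_realizationD:
  assumes "is_realization X ch P" "x \<in> X" "y \<in> X" "z \<in> X" "distinct3 x y z"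
  shows "orient (P x) (P y) (P z) \<noteq> 0" "ch x y z = 1 \<longleftrightarrow> orient (P x) (P y) (P z) > 0"
  using assms unfolding is_realization_def by blast+

lemma is_realization_rescale:
  assumes "is_realization X ch Q"
    and "\<And>x y z. x \<in> X \<Longrightarrow> y \<in> X \<Longrightarrow> z \<in> X \<Longrightarrow> distinct3 x y z \<Longrightarrow>
      \<exists>k>0. orient (P x) (P y) (P z) = k * orient (Q x) (Q y) (Q z)"
  shows "is_realization X ch P"
  unfolding is_realization_def
proof (intro ballI impI)
  fix x y z assume xyz: "x \<in> X" "y \<in> X" "z \<in> X" "distinct3 x y z"
  then obtain k where "k > 0" "orient (P x) (P y) (P z) = k * orient (Q x) (Q y) (Q z)"
    using assms(2) by blast
  with is_realizationD[OF assms(1) xyz]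
  show "orient (P x) (P y) (P z) \<noteq> 0 \<and> (ch x y z = 1 \<longleftrightarrow> orient (P x) (P y) (P z) > 0)"
    by (simp add: zero_less_mult_iff)
qed

lemma chirotope_alternating:
  assumes "chirotope X ch" "p \<in> X" "q \<in> X" "r \<in> X" "distinct3 p q r"
  shows "ch p q r = ch q r p" "ch p q r = - ch p r q"
  using conjunct1[OF assms(1)[unfolded chirotope_def]] assms(2-5) by blast+

lemma hull_succ_eqI:
  assumes "chirotope X ch" "u \<in> X" "m \<in> X" "m \<noteq> u"
    and "\<And>z. z \<in> X - {u, m} \<Longrightarrow> ch u m z = 1"
  shows "hull_succ X ch u = m"
  unfolding hull_succ_def
proof (rule the_equality)
  show "m \<in> X \<and> m \<noteq> u \<and> (\<forall>z\<in>X - {u, m}. ch u m z = 1)"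
    using assms by blast
next
  fix y assume y: "y \<in> X \<and> y \<noteq> u \<and> (\<forall>z\<in>X - {u, y}. ch u y z = 1)"
  show "y = m"
  proof (rule ccontr)
    assume "y \<noteq> m"
    then have "ch u m y = 1" "ch u y m = 1"
      using assms(3-5) y by auto
    moreover have "ch u m y = - ch u y m"
      using chirotope_alternating(2)[OF assms(1,2,3), of y] y \<open>y \<noteq> m\<close> assms(4)
      by (auto simp: distinct3_def)
    ultimately show False by simp
  qed
qed

lemma hull_pred_eqI:
  assumes "chirotope X ch" "u \<in> X" "M \<in> X" "M \<noteq> u"
    and "\<And>z. z \<in> X - {u, M} \<Longrightarrow> ch M u z = 1"
  shows "hull_pred X ch u = M"
  unfolding hull_pred_def
proof (rule the_equality)
  show "M \<in> X \<and> M \<noteq> u \<and> (\<forall>z\<in>X - {u, M}. ch M u z = 1)"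
    using assms by blast
next
  fix y assume y: "y \<in> X \<and> y \<noteq> u \<and> (\<forall>z\<in>X - {u, y}. ch y u z = 1)"
  show "y = M"
  proof (rule ccontr)
    assume "y \<noteq> M"
    then have yM: "distinct3 y u M" "distinct3 M u y" "distinct3 u y M"
      using y assms(4) by (auto simp: distinct3_def)
    have "ch u M y = ch y u M"
      using chirotope_alternating(1)[OF assms(1) _ assms(2,3) yM(1)] y by simp
    moreover have "ch u y M = ch M u y"
      using chirotope_alternating(1)[OF assms(1) assms(3,2) _ yM(2)] y by simp
    moreover have "ch u y M = - ch u M y"
      using chirotope_alternating(2)[OF assms(1,2) _ assms(3) yM(3)] y by simp
    ultimately have "ch y u M = - ch M u y"
      by simp
    moreover have "ch y u M = 1" "ch M u y = 1"
      using y assms(3-5) \<open>y \<noteq> M\<close> by auto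
    ultimately show False by simp
  qed
qed

lemma extreme_angular_order:
  assumes "is_realization X ch Q" "extreme X ch u"
  shows "totalp_on (X - {u}) (\<lambda>a b. orient (Q u) (Q a) (Q b) > 0)"
    and "transp_on (X - {u}) (\<lambda>a b. orient (Q u) (Q a) (Q b) > 0)"
proof -
  have u: "u \<in> X"
    using assms(2) by (simp add: extreme_def)
  have nonzero: "orient (Q u) (Q a) (Q b) \<noteq> 0" if "a \<in> X - {u}" "b \<in> X - {u}" "a \<noteq> b" for a b
    using is_realizationD(1)[OF assms(1) u, of a b] that by (auto simp: distinct3_def)
  then show "totalp_on (X - {u}) (\<lambda>a b. orient (Q u) (Q a) (Q b) > 0)"
    by (intro totalp_onI) (smt (verit) orient_swap)
  obtain v e where v: "v \<in> X" "v \<noteq> u" and e: "\<And>z. z \<in> X - {u, v} \<Longrightarrow> ch u v z = e"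
    using assms(2) by (auto simp: extreme_def)
  \<comment> \<open>\<open>s\<close> orients the line through \<open>u\<close> and \<open>v\<close> so that \<open>X - {u, v}\<close> lies strictly on its positive side\<close>
  define s :: real where "s = (if e = 1 then 1 else -1)"
  have strict: "s * orient (Q u) (Q v) (Q z) > 0" if "z \<in> X - {u, v}" for z
    using nonzero[of v z] is_realizationD(2)[OF assms(1) u v(1), of z] e[OF that] that v
    by (auto simp: s_def distinct3_def)
  have weak: "s * orient (Q u) (Q v) (Q z) \<ge> 0" if "z \<in> X - {u}" for z
    using strict[of z] that by (cases "z = v") (auto simp: orient_def)
  show "transp_on (X - {u}) (\<lambda>a b. orient (Q u) (Q a) (Q b) > 0)"
  proof (intro transp_onI)
    fix a b c
    assume abc: "a \<in> X - {u}" "b \<in> X - {u}" "c \<in> X - {u}"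
      and ab: "orient (Q u) (Q a) (Q b) > 0" and bc: "orient (Q u) (Q b) (Q c) > 0"
    have "a \<noteq> b"
      using ab by (auto simp: orient_def)
    have "a \<noteq> c"
    proof
      assume "a = c"
      with bc have "orient (Q u) (Q b) (Q a) > 0"
        by simp
      with ab show False
        using orient_swap[of "Q u" "Q b" "Q a"] by linarith
    qed
    show "orient (Q u) (Q a) (Q c) > 0"
    proof (rule ccontr)
      assume "\<not> orient (Q u) (Q a) (Q c) > 0"
      then have "orient (Q u) (Q c) (Q a) > 0"
        using nonzero[OF abc(1,3) \<open>a \<noteq> c\<close>] orient_swap[of "Q u" "Q a" "Q c"] by linarith
      then have "s * orient (Q u) (Q v) (Q a) = 0" "s * orient (Q u) (Q v) (Q b) = 0"
        using orient_cycle_in_closed_halfplane[OF ab bc] weak abc by blast+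
      then show False
        using strict[of a] strict[of b] abc \<open>a \<noteq> b\<close> by force
    qed
  qed
qed

lemma extreme_hull_neighbours:
  assumes "finite X" "card X \<ge> 3" "is_realization X ch Q" "extreme X ch u"
  obtains m M where "m \<in> X" "M \<in> X" "distinct3 u m M"
    "\<And>z. z \<in> X - {u, m} \<Longrightarrow> ch u m z = 1" "\<And>z. z \<in> X - {u, M} \<Longrightarrow> ch M u z = 1"
proof -
  let ?less = "\<lambda>a b. orient (Q u) (Q a) (Q b) > 0"
  have u: "u \<in> X"
    using assms(4) by (simp add: extreme_def)
  have fin: "finite (X - {u})"
    using assms(1) by simp
  have "\<not> card (X - {u}) \<le> Suc 0"
    using assms(1,2) u by simp
  then obtain a b where ab: "a \<in> X - {u}" "b \<in> X - {u}" "a \<noteq> b"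
    using card_le_Suc0_iff_eq[OF fin] by blast
  then have ne: "X - {u} \<noteq> {}"
    by blast
  note order = extreme_angular_order(2,1)[OF assms(3,4)]
  obtain m where m: "m \<in> X - {u}" "\<And>z. z \<in> X - {u} \<Longrightarrow> z \<noteq> m \<Longrightarrow> ?less m z"
    using Finite_Set.bex_least_element[OF fin ne order] by blast
  obtain M where M: "M \<in> X - {u}" "\<And>z. z \<in> X - {u} \<Longrightarrow> z \<noteq> M \<Longrightarrow> ?less z M"
    using Finite_Set.bex_greatest_element[OF fin ne order] by blast
  have "m \<noteq> M"
  proof
    assume "m = M"
    obtain z where "z \<in> X - {u}" "z \<noteq> m"
      using ab by blast
    then show False
      using m(2)[of z] M(2)[of z] \<open>m = M\<close> orient_swap[of "Q u" "Q m" "Q z"] by simp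
  qed
  show thesis
  proof
    show "m \<in> X" "M \<in> X" "distinct3 u m M"
      using m(1) M(1) \<open>m \<noteq> M\<close> by (auto simp: distinct3_def)
  next
    fix z assume z: "z \<in> X - {u, m}"
    then have "distinct3 u m z"
      using m(1) by (auto simp: distinct3_def)
    moreover have "?less m z"
      using m(2) z by blast
    ultimately show "ch u m z = 1"
      using is_realizationD(2)[OF assms(3) u, of m z] m(1) z by blast
  next
    fix z assume z: "z \<in> X - {u, M}"
    then have "distinct3 M u z"
      using M(1) by (auto simp: distinct3_def)
    moreover have "orient (Q M) (Q u) (Q z) > 0"
      using M(2) z orient_cycle[of "Q M" "Q u" "Q z"] by auto
    ultimately show "ch M u z = 1"
      using is_realizationD(2)[OF assms(3) _ u, of M z] M(1) z by blast
  qed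
qed

text \<open>Cramer's rule: the coordinates of \<open>p\<close> in the affine frame with origin \<open>c\<close> and
  axes \<open>a - c\<close>, \<open>b - c\<close>.\<close>
definition frame_coords ::
    "real \<times> real \<Rightarrow> real \<times> real \<Rightarrow> real \<times> real \<Rightarrow> real \<times> real \<Rightarrow> real \<times> real" where
  "frame_coords c a b p = (orient c p b / orient c a b, orient c a p / orient c a b)"

lemma orient_frame_coords:
  assumes "orient c a b \<noteq> 0"
  shows "orient (frame_coords c a b p) (frame_coords c a b q) (frame_coords c a b r) =
    orient p q r / orient c a b"
proof -
  let ?D = "orient c a b" and ?x = "\<lambda>p. orient c p b" and ?y = "\<lambda>p. orient c a p"
  have pair: "?x s * ?y t - ?y s * ?x t = ?D * orient c s t" for s t
    by (simp add: orient_def algebra_simps)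
  have sum: "orient p q r = orient c p q + orient c q r + orient c r p"
    by (simp add: orient_def algebra_simps)
  have "?x p * (?y q * ?D - ?y r * ?D) - ?y p * (?x q * ?D - ?x r * ?D)
        + ?D * (?x q * ?y r - ?x r * ?y q)
      = ?D * ((?x p * ?y q - ?y p * ?x q) + (?x q * ?y r - ?y q * ?x r)
        + (?x r * ?y p - ?y r * ?x p))"
    by (simp add: algebra_simps)
  also have "\<dots> = ?D * ?D * orient p q r"
    unfolding pair sum by (simp add: algebra_simps)
  finally have "orient (frame_coords c a b p) (frame_coords c a b q) (frame_coords c a b r) =
      ?D * ?D * orient p q r / (?D * ?D * ?D)"
    using assms unfolding frame_coords_def by (simp add: orient_homogeneous)
  then show ?thesis
    using assms by simp
qed

lemma frame_coords_frame:
  assumes "orient c a b \<noteq> 0"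
  shows "frame_coords c a b c = (0, 0)" "frame_coords c a b a = (1, 0)" "frame_coords c a b b = (0, 1)"
  using assms by (simp_all add: frame_coords_def orient_def algebra_simps)

lemma realization_normalize:
  assumes "is_realization X ch Q" "u \<in> X" "m \<in> X" "M \<in> X" "distinct3 u m M"
    and succ: "\<And>z. z \<in> X - {u, m} \<Longrightarrow> ch u m z = 1"
    and pred: "\<And>z. z \<in> X - {u, M} \<Longrightarrow> ch M u z = 1"
  obtains R where "is_realization X ch R" "R u = (0, 1)" "R m = (0, 0)" "R M = (1, 0)"
    "\<And>z. z \<in> X \<Longrightarrow> snd (R z) \<le> 1"
proof -
  have "ch u m M = 1"
    using succ[of M] assms(4,5) by (auto simp: distinct3_def)
  then have "orient (Q u) (Q m) (Q M) > 0"
    using is_realizationD(2)[OF assms(1-5)] by simp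
  then have pos: "orient (Q m) (Q M) (Q u) > 0"
    by (metis orient_cycle)
  define R where "R = frame_coords (Q m) (Q M) (Q u) \<circ> Q"
  have R: "is_realization X ch R"
  proof (rule is_realization_rescale[OF assms(1)])
    fix x y z
    show "\<exists>k>0. orient (R x) (R y) (R z) = k * orient (Q x) (Q y) (Q z)"
      using pos by (intro exI[of _ "1 / orient (Q m) (Q M) (Q u)"])
        (simp add: R_def orient_frame_coords)
  qed
  have frame: "R u = (0, 1)" "R m = (0, 0)" "R M = (1, 0)"
    using frame_coords_frame pos by (simp_all add: R_def)
  have "snd (R z) \<le> 1" if z: "z \<in> X" for z
  proof (cases "z \<in> {u, m, M}")
    case True
    then show ?thesis using frame by auto
  next
    case False
    then have "distinct3 u m z" "distinct3 M u z"
      using assms(5) by (auto simp: distinct3_def)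
    moreover have "ch u m z = 1" "ch M u z = 1"
      using succ pred z False by auto
    ultimately have "orient (R u) (R m) (R z) > 0" "orient (R M) (R u) (R z) > 0"
      using is_realizationD(2)[OF R assms(2,3) z] is_realizationD(2)[OF R assms(4,2) z]
      by simp_all
    then show ?thesis
      using frame by (simp add: orient_def)
  qed
  with R frame show thesis
    using that by blast
qed

lemma realization_lines_miss_vertical_segment:
  assumes "finite X" "is_realization X ch R" "u \<in> X" "R u = (0, 1)"
  obtains d where "d > 0" "\<And>a b y. a \<in> X - {u} \<Longrightarrow> b \<in> X - {u} \<Longrightarrow> a \<noteq> b \<Longrightarrow>
    dist y 1 < d \<Longrightarrow> orient (R a) (R b) (0, y) \<noteq> 0"
proof -
  define S where "S = {(a, b). a \<in> X - {u} \<and> b \<in> X - {u} \<and> a \<noteq> b}"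
  have at_1: "orient (R a) (R b) (0, 1) \<noteq> 0" if "(a, b) \<in> S" for a b
    using is_realizationD(1)[OF assms(2), of a b u] that assms(3,4)
    by (auto simp: S_def distinct3_def)
  have "finite S"
    using assms(1) by (auto simp: S_def intro: finite_subset[of _ "X \<times> X"])
  then have "\<forall>\<^sub>F y in at 1. \<forall>(a, b)\<in>S. orient (R a) (R b) (0, y) \<noteq> 0"
  proof (rule eventually_ball_finite, clarify)
    fix a b assume "(a, b) \<in> S"
    have "((\<lambda>y. orient (R a) (R b) (0, y)) \<longlongrightarrow> orient (R a) (R b) (0, 1)) (at 1)"
      unfolding orient_def by (intro tendsto_intros)
    then show "\<forall>\<^sub>F y in at 1. orient (R a) (R b) (0, y) \<noteq> 0"
      using at_1[OF \<open>(a, b) \<in> S\<close>] by (rule tendsto_imp_eventually_ne)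
  qed
  then obtain d where d: "d > 0"
    "\<And>y. y \<noteq> 1 \<Longrightarrow> dist y 1 < d \<Longrightarrow> \<forall>(a, b)\<in>S. orient (R a) (R b) (0, y) \<noteq> 0"
    by (auto simp: eventually_at)
  show thesis
  proof (rule that[OF d(1)])
    fix a b and y :: real
    assume "a \<in> X - {u}" "b \<in> X - {u}" "a \<noteq> b" "dist y 1 < d"
    then show "orient (R a) (R b) (0, y) \<noteq> 0"
      using at_1[of a b] d(2)[of y] by (cases "y = 1") (auto simp: S_def)
  qed
qed

text \<open>A projective map fixing \<open>(0, 0)\<close>, \<open>(1, 0)\<close> and \<open>(0, 1)\<close> that sends the line
  \<open>y = 1 + d\<close> to infinity: the segment from \<open>(0, 1)\<close> to \<open>(0, 1 + d)\<close> becomes the whole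
  upward ray from \<open>(0, 1)\<close>.\<close>
definition squeeze :: "real \<Rightarrow> real \<times> real \<Rightarrow> real \<times> real" where
  "squeeze d p = ((1 + d) * fst p / (1 + d - snd p), d * snd p / (1 + d - snd p))"

lemma squeeze_frame:
  assumes "d > 0"
  shows "squeeze d (0, 0) = (0, 0)" "squeeze d (1, 0) = (1, 0)" "squeeze d (0, 1) = (0, 1)"
  using assms by (simp_all add: squeeze_def)

lemma squeeze_vertical:
  assumes "d > 0" "d + t > 0"
  shows "squeeze d (0, (1 + d) * t / (d + t)) = (0, t)"
proof -
  have "1 + d - (1 + d) * t / (d + t) = d * (1 + d) / (d + t)"
    using assms(2) by (simp add: field_simps)
  with assms show ?thesis
    by (simp add: squeeze_def)
qed

lemma orient_squeeze:
  assumes "snd a \<noteq> 1 + d" "snd b \<noteq> 1 + d" "snd c \<noteq> 1 + d"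
  shows "orient (squeeze d a) (squeeze d b) (squeeze d c) =
    d * (1 + d)\<^sup>2 * orient a b c / ((1 + d - snd a) * (1 + d - snd b) * (1 + d - snd c))"
  using assms unfolding squeeze_def
  by (simp add: orient_homogeneous) (simp add: orient_def power2_eq_square algebra_simps)

lemma is_realization_squeeze:
  assumes "is_realization X ch R" "d > 0" "\<And>z. z \<in> X \<Longrightarrow> snd (R z) < 1 + d"
  shows "is_realization X ch (squeeze d \<circ> R)"
  using assms(1)
proof (rule is_realization_rescale)
  fix x y z assume "x \<in> X" "y \<in> X" "z \<in> X" "distinct3 x y z"
  then have "1 + d - snd (R x) > 0" "1 + d - snd (R y) > 0" "1 + d - snd (R z) > 0"
    using assms(3) by force+
  with assms(2) show "\<exists>k>0. orient ((squeeze d \<circ> R) x) ((squeeze d \<circ> R) y) ((squeeze d \<circ> R) z) =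
      k * orient (R x) (R y) (R z)"
    by (intro exI[of _ "d * (1 + d)\<^sup>2 /
        ((1 + d - snd (R x)) * (1 + d - snd (R y)) * (1 + d - snd (R z)))"])
      (simp add: orient_squeeze)
qed

lemma upward_ray_disjoint_line_through_squeeze:
  assumes "d > 0" "snd a < 1 + d" "snd b < 1 + d"
    and "\<And>y. 1 \<le> y \<Longrightarrow> y < 1 + d \<Longrightarrow> orient a b (0, y) \<noteq> 0"
  shows "upward_ray (0, 1) \<inter> line_through (squeeze d a) (squeeze d b) = {}"
proof (rule ccontr)
  assume "upward_ray (0, 1) \<inter> line_through (squeeze d a) (squeeze d b) \<noteq> {}"
  then obtain t where t: "t \<ge> 1" and "(0, t) \<in> line_through (squeeze d a) (squeeze d b)"
    by (fastforce simp: upward_ray_def)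
  moreover define y where "y = (1 + d) * t / (d + t)"
  moreover have "d + t > 0"
    using assms(1) t by linarith
  ultimately have on_line: "orient (squeeze d a) (squeeze d b) (squeeze d (0, y)) = 0"
    using squeeze_vertical[OF \<open>d > 0\<close>] orient_eq_0_if_in_line_through by simp
  have "d * 1 \<le> d * t"
    using assms(1) t by (intro mult_left_mono) auto
  with \<open>d + t > 0\<close> have y_ge: "1 \<le> y"
    by (simp add: y_def le_divide_eq algebra_simps)
  have y_less: "y < 1 + d"
    using \<open>d + t > 0\<close> assms(1)
    by (simp add: y_def divide_less_eq algebra_simps) (metis add_pos_pos mult_pos_pos)
  with on_line assms(1-3) have "orient a b (0, y) = 0"
    by (simp add: orient_squeeze)
  with assms(4) y_ge y_less show False
    by blast
qed

lemma realization_squeeze_clears_upward_ray: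
  assumes "finite X" "is_realization X ch R" "u \<in> X" "R u = (0, 1)"
    and "\<And>z. z \<in> X \<Longrightarrow> snd (R z) \<le> 1"
  obtains d where "d > 0" "is_realization X ch (squeeze d \<circ> R)"
    "\<And>a b. a \<in> X - {u} \<Longrightarrow> b \<in> X - {u} \<Longrightarrow> a \<noteq> b \<Longrightarrow>
      upward_ray (0, 1) \<inter> line_through (squeeze d (R a)) (squeeze d (R b)) = {}"
proof -
  obtain d where d: "d > 0" and lines: "\<And>a b y. a \<in> X - {u} \<Longrightarrow> b \<in> X - {u} \<Longrightarrow> a \<noteq> b \<Longrightarrow>
      dist y 1 < d \<Longrightarrow> orient (R a) (R b) (0, y) \<noteq> 0"
    using realization_lines_miss_vertical_segment[OF assms(1-4)] by blast
  have below: "snd (R z) < 1 + d" if "z \<in> X" for z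
    using assms(5)[OF that] d by linarith
  show thesis
  proof (rule that[OF d])
    show "is_realization X ch (squeeze d \<circ> R)"
      using assms(2) d below by (rule is_realization_squeeze)
  next
    fix a b assume "a \<in> X - {u}" "b \<in> X - {u}" "a \<noteq> b"
    then show "upward_ray (0, 1) \<inter> line_through (squeeze d (R a)) (squeeze d (R b)) = {}"
      by (intro upward_ray_disjoint_line_through_squeeze d below lines) (auto simp: dist_real_def)
  qed
qed

theorem lemma2p4:
  fixes X :: "'a set" and ch :: "'a chi" and u :: 'a
  assumes "finite X" and "card X \<ge> 3"
    and "rooted_chirotope X ch u"
    and "realizable X ch"
  shows "\<exists>P. is_realization X ch P \<and>
           P u = (0, 1) \<and> P (hull_succ X ch u) = (0, 0) \<and> P (hull_pred X ch u) = (1, 0) \<and>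
           (\<forall>x\<in>X - {u}. \<forall>y\<in>X - {u}. x \<noteq> y \<longrightarrow>
               upward_ray (P u) \<inter> line_through (P x) (P y) = {})"
proof -
  obtain Q where Q: "is_realization X ch Q"
    using assms(4) by (auto simp: realizable_def)
  have ch: "chirotope X ch" and u: "extreme X ch u" "u \<in> X"
    using assms(3) by (auto simp: rooted_chirotope_def extreme_def)
  obtain m M where mM: "m \<in> X" "M \<in> X" "distinct3 u m M"
    and succ: "\<And>z. z \<in> X - {u, m} \<Longrightarrow> ch u m z = 1"
    and pred: "\<And>z. z \<in> X - {u, M} \<Longrightarrow> ch M u z = 1"
    using extreme_hull_neighbours[OF assms(1,2) Q u(1)] by blast
  have hull: "hull_succ X ch u = m" "hull_pred X ch u = M"
    using hull_succ_eqI[OF ch u(2) mM(1) _ succ] hull_pred_eqI[OF ch u(2) mM(2) _ pred] mM(3)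
    by (auto simp: distinct3_def)
  obtain R where R: "is_realization X ch R" "R u = (0, 1)" "R m = (0, 0)" "R M = (1, 0)"
    and below: "\<And>z. z \<in> X \<Longrightarrow> snd (R z) \<le> 1"
    using realization_normalize[OF Q u(2) mM succ pred] by blast
  obtain d where "d > 0" "is_realization X ch (squeeze d \<circ> R)"
    "\<And>a b. a \<in> X - {u} \<Longrightarrow> b \<in> X - {u} \<Longrightarrow> a \<noteq> b \<Longrightarrow>
      upward_ray (0, 1) \<inter> line_through (squeeze d (R a)) (squeeze d (R b)) = {}"
    using realization_squeeze_clears_upward_ray[OF assms(1) R(1) u(2) R(2) below] by blast
  then show ?thesis
    using R(2-4) squeeze_frame hull by (intro exI[of _ "squeeze d \<circ> R"]) auto
qed

end
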